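(* Let $g:(0,\infty)\to(0,\infty)$ be a function which is constant on the interval $(0,4)$ and such that, for some positive real number $K$, $g(x)=K\left(\frac{x}{2}+1\right)g\left(\frac{x}{2}+1\right)$ for all $x\ge4$. Then there exists a positive real number $c$ such that $g(x)<x^{\log_2(x)/2+c}$ for every sufficiently large real number $x$. *)

theory Defs
  imports Complex_Main
begin

end

theory Submission
  imports Defs
begin

(* Shifting by the fixed point 2 of x \<mapsto> x/2 + 1, the function G t = g (t + 2) satisfies
   G t \<le> C t G (t/2) with C = 3K/2 for t \<ge> 2.  Unwinding this halving recurrence about log2 t
   times multiplies the factors C t, C t/2, C t/4, ..., whose product is at most
   2^((log2 t + D)^2/2) for a suitable constant D; and a 2^((log2 x + D)^2/2) is eventually
   below x^(log2 x/2 + D + 1). *)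

lemma powr_half_log_eq:
  fixes b x c :: real
  assumes "b > 0" "b \<noteq> 1" "x > 0"
  shows "x powr (log b x / 2 + c) = b powr ((log b x)\<^sup>2 / 2 + c * log b x)"
proof -
  have "x powr (log b x / 2 + c) = (b powr log b x) powr (log b x / 2 + c)"
    using assms by simp
  also have "\<dots> = b powr ((log b x)\<^sup>2 / 2 + c * log b x)"
    by (simp add: powr_powr power2_eq_square algebra_simps)
  finally show ?thesis .
qed

lemma halving_recurrence_bound:
  fixes G :: "real \<Rightarrow> real" and a C D t :: real
  assumes base: "\<And>t. 0 < t \<Longrightarrow> t < 2 \<Longrightarrow> G t \<le> a"
    and step: "\<And>t. t \<ge> 2 \<Longrightarrow> G t \<le> C * t * G (t / 2)"
    and a: "a \<ge> 0" and C: "C > 0" and D: "D \<ge> log 2 C + 1 / 2"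
    and t: "t > 0"
  shows "G t \<le> a * 2 powr ((log 2 t + D)\<^sup>2 / 2)"
proof -
  have small: "G t \<le> a * 2 powr ((log 2 t + D)\<^sup>2 / 2)" if "0 < t" "t < 2" for t
  proof -
    have "a * 1 \<le> a * 2 powr ((log 2 t + D)\<^sup>2 / 2)"
      using a by (intro mult_left_mono) (simp_all add: ge_one_powr_ge_zero)
    with base[OF that] show ?thesis by simp
  qed
  have "G t \<le> a * 2 powr ((log 2 t + D)\<^sup>2 / 2)" if "0 < t" "t < 2 ^ n" for n t
    using that
  proof (induction n arbitrary: t)
    case 0
    then show ?case using small by simp
  next
    case (Suc n)
    show ?case
    proof (cases "t < 2")
      case True
      with Suc.prems show ?thesis using small by blast
    next
      case False
      define s where "s = log 2 t + D"
      have log_half: "log 2 (t / 2) + D = s - 1"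
        using Suc.prems by (simp add: s_def log_divide)
      have "G t \<le> C * t * G (t / 2)"
        using False step by simp
      also have "\<dots> \<le> C * t * (a * 2 powr ((s - 1)\<^sup>2 / 2))"
      proof -
        have "G (t / 2) \<le> a * 2 powr ((log 2 (t / 2) + D)\<^sup>2 / 2)"
          using Suc by simp
        then show ?thesis
          using C Suc.prems log_half by (intro mult_left_mono) auto
      qed
      also have "\<dots> = a * 2 powr (log 2 C + log 2 t + (s - 1)\<^sup>2 / 2)"
        using C Suc.prems by (simp add: powr_add)
      also have "\<dots> \<le> a * 2 powr (s\<^sup>2 / 2)"
      proof -
        have "log 2 C + log 2 t + (s - 1)\<^sup>2 / 2 = s\<^sup>2 / 2 + (log 2 C + 1 / 2 - D)"
          by (simp add: s_def power2_eq_square field_simps)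
        then show ?thesis
          using a D by (intro mult_left_mono) auto
      qed
      finally show ?thesis by (simp add: s_def)
    qed
  qed
  moreover obtain n :: nat where "t < 2 ^ n"
    using real_arch_pow[of 2 t] by auto
  ultimately show ?thesis using t by blast
qed

lemma shifted_recurrence_le:
  fixes g :: "real \<Rightarrow> real" and K t :: real
  assumes pos: "\<And>x. x > 0 \<Longrightarrow> g x > 0"
    and Kpos: "K > 0"
    and rec: "\<And>x. x \<ge> 4 \<Longrightarrow> g x = K * (x / 2 + 1) * g (x / 2 + 1)"
    and t: "t \<ge> 2"
  shows "g (t + 2) \<le> 3 / 2 * K * t * g (t / 2 + 2)"
proof -
  have "g (t + 2) = K * (t / 2 + 2) * g (t / 2 + 2)"
    using rec[of "t + 2"] t by (simp add: add_divide_distrib add.commute)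
  also have "\<dots> \<le> K * (3 / 2 * t) * g (t / 2 + 2)"
    using t Kpos pos[of "t / 2 + 2"] by (intro mult_right_mono mult_left_mono) auto
  finally show ?thesis by simp
qed

lemma eventually_quadratic_log_powr_less:
  fixes a D :: real
  assumes "D \<ge> 0"
  shows "\<forall>\<^sub>F x in at_top. a * 2 powr ((log 2 x + D)\<^sup>2 / 2) < x powr (log 2 x / 2 + (D + 1))"
  using eventually_gt_at_top[of "max 1 (a * 2 powr (D\<^sup>2 / 2))"]
proof eventually_elim
  case (elim x)
  define u where "u = log 2 x"
  have "(u + D)\<^sup>2 / 2 = D\<^sup>2 / 2 + (u\<^sup>2 / 2 + D * u)"
    by (simp add: power2_eq_square algebra_simps)
  then have "a * 2 powr ((u + D)\<^sup>2 / 2) = a * 2 powr (D\<^sup>2 / 2) * 2 powr (u\<^sup>2 / 2 + D * u)"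
    by (simp only: powr_add mult.assoc)
  also have "\<dots> < x * 2 powr (u\<^sup>2 / 2 + D * u)"
    using elim by simp
  also have "\<dots> = 2 powr (u\<^sup>2 / 2 + (D + 1) * u)"
    using elim by (simp add: u_def powr_add algebra_simps)
  also have "\<dots> = x powr (log 2 x / 2 + (D + 1))"
    using elim by (simp add: u_def powr_half_log_eq)
  finally show ?case by (simp add: u_def)
qed

theorem lemma8p7:
  fixes g :: "real \<Rightarrow> real" and K :: real
  assumes pos: "\<And>x. x > 0 \<Longrightarrow> g x > 0"
    and const: "\<exists>a. \<forall>x. 0 < x \<and> x < 4 \<longrightarrow> g x = a"
    and Kpos: "K > 0"
    and rec: "\<And>x. x \<ge> 4 \<Longrightarrow> g x = K * (x / 2 + 1) * g (x / 2 + 1)"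
  shows "\<exists>c>0. \<forall>\<^sub>F x in at_top. g x < x powr (log 2 x / 2 + c)"
proof -
  obtain a where a: "\<And>x. 0 < x \<Longrightarrow> x < 4 \<Longrightarrow> g x = a"
    using const by blast
  have "a > 0" using a[of 1] pos[of 1] by simp
  define D where "D = max 0 (log 2 (3 / 2 * K) + 1 / 2)"
  have D: "D \<ge> 0" by (simp add: D_def)
  have shifted_bound: "g (t + 2) \<le> a * 2 powr ((log 2 t + D)\<^sup>2 / 2)" if "t > 0" for t
    using a shifted_recurrence_le[OF pos Kpos rec] \<open>a > 0\<close> Kpos that
    by (intro halving_recurrence_bound[where G = "\<lambda>t. g (t + 2)" and C = "3 / 2 * K"])
      (auto simp: D_def)
  have "\<forall>\<^sub>F x in at_top. g x \<le> a * 2 powr ((log 2 x + D)\<^sup>2 / 2)"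
    using eventually_ge_at_top[of 3]
  proof eventually_elim
    case (elim x)
    have "0 \<le> log 2 (x - 2) + D" "log 2 (x - 2) + D \<le> log 2 x + D"
      using elim D by simp_all
    then have "a * 2 powr ((log 2 (x - 2) + D)\<^sup>2 / 2) \<le> a * 2 powr ((log 2 x + D)\<^sup>2 / 2)"
      using \<open>a > 0\<close> by (intro mult_left_mono) (auto intro: power_mono)
    with shifted_bound[of "x - 2"] elim show ?case by simp
  qed
  with eventually_quadratic_log_powr_less[OF D, of a]
  have "\<forall>\<^sub>F x in at_top. g x < x powr (log 2 x / 2 + (D + 1))"
    by eventually_elim simp
  with D show ?thesis by (intro exI[of _ "D + 1"]) simp
qed

end
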